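(* For each $j\ge0$ the polynomial $c_j(q)$ has degree $j$, leading coefficient $(-1)^jj!\,G_j$ and constant term $B_j$. Moreover, in $\mathbb Q[q][[t]]$, \[ \sum_{j\ge0}c_j(q)\frac{t^j}{j!}=\frac{t}{(1-qt)^{-1/q}-1}. \]
   Context: Let $q$ be a variable. For $a$ in a commutative ring, $k$ in it and $i\in\mathbb N_0$, $(a)_{k,i}=a(a+k)\cdots(a+(i-1)k)$ (with $(a)_{k,0}=1$). The sequence $(c_i(q))_{i\ge0}$ in $\mathbb Q[q]$ is defined recursively by $\sum_{i=0}^{j}\frac{(1)_{q,j+1-i}}{(j+1-i)!}\frac{c_i(q)}{i!}=\delta_{j,0}$ for all $j\ge0$ (so $c_0=1$). The Bernoulli numbers $B_j$ are defined by $\sum_{i=0}^{j}\binom{j+1}{i}B_i=\delta_{j,0}$ for $j\ge0$. The Gregory coefficients $G_j$ are defined by $\sum_{j\ge0}G_jt^j=t/\ln(1+t)$ (so $G_0=1$, $G_1=1/2$, $G_2=-1/12$). *)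

theory Defs
  imports "HOL-Computational_Algebra.Computational_Algebra"
begin

definition gpoch :: "'a::comm_ring_1 \<Rightarrow> 'a \<Rightarrow> nat \<Rightarrow> 'a" where
  "gpoch a k i = (\<Prod>m<i. a + of_nat m * k)"

abbreviation qvar :: "rat poly" where "qvar \<equiv> [:0, 1:]"

text \<open>Gregory coefficients: sum_j G_j t^j = t / ln(1+t); fps_ln 1 is ln(1+t).\<close>
definition gregory :: "nat \<Rightarrow> rat" where
  "gregory j = (fps_X / fps_ln 1) $ j"

text \<open>The formal power series (1 - q t)^(-1/q) over Q for a fixed nonzero rational q,
  i.e. the binomial series (1+X)^(-1/q) composed with -q X.\<close>
definition powq_series :: "rat \<Rightarrow> rat fps" where
  "powq_series q = fps_binomial (-1/q) oo (fps_const (-q) * fps_X)"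

end

theory Submission
  imports Defs
begin

text \<open>
  The hypothesis on c says that F(t) C(t) = 1 in Q[q][[t]], where C(t) = sum_j c_j(q) t^j / j! and
  F(t) = sum_n (1)_{q,n+1} t^n / (n+1)! = ((1 - q t)^(-1/q) - 1) / t. Evaluating at a fixed
  q \<noteq> 0 gives the generating function; at q = 0 the series F becomes (e^t - 1) / t, whose
  reciprocal generates the Bernoulli numbers. Since (1)_{q,n+1} has degree n and top coefficient n!,
  induction gives deg c_j \<le> j, and the numbers coeff (c j) j / j! are the coefficients of the
  reciprocal of sum_n t^n / (n+1) = -ln(1 - t) / t, that is (-1)^j G_j. Kaluza's sign argument shows
  that they never vanish, so the degree is exactly j.
\<close>

lemma lower_triangular_solution_unique:
  fixes x y :: "nat \<Rightarrow> 'a::idom"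
  assumes "\<And>j. (\<Sum>i\<le>j. a j i * x i) = d j" and "\<And>j. (\<Sum>i\<le>j. a j i * y i) = d j"
    and "\<And>j. a j j \<noteq> 0"
  shows "x j = y j"
proof (induction j rule: less_induct)
  case (less j)
  have "(\<Sum>i<j. a j i * x i) = (\<Sum>i<j. a j i * y i)"
    using less by (intro sum.cong) auto
  moreover have "a j j * x j + (\<Sum>i<j. a j i * x i) = a j j * y j + (\<Sum>i<j. a j i * y i)"
    using assms(1,2)[of j] by (simp add: lessThan_Suc_atMost[symmetric] add.commute)
  ultimately show ?case
    using assms(3)[of j] by simp
qed

lemma coeff_mult_degree_le_sum:
  fixes p q :: "'a::comm_semiring_0 poly"
  assumes "degree p \<le> m" and "degree q \<le> n"
  shows "coeff (p * q) (m + n) = coeff p m * coeff q n"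
proof (cases "degree p = m \<and> degree q = n")
  case True
  then show ?thesis using coeff_mult_degree_sum[of p q] by simp
next
  case False
  then have "degree p < m \<or> degree q < n" using assms by auto
  moreover have "degree (p * q) < m + n"
    using degree_mult_le[of p q] assms calculation by linarith
  ultimately show ?thesis by (auto simp: coeff_eq_0)
qed

lemma poly_gpoch_qvar: "poly (gpoch 1 [:0, 1:] n) x = gpoch 1 x n"
  by (simp add: gpoch_def poly_prod mult.commute)

lemma gpoch_qvar_degree_top_coeff:
  shows "degree (gpoch 1 [:0, 1:] (Suc n) :: 'a::{comm_ring_1, ring_char_0} poly) \<le> n"
    and "coeff (gpoch 1 [:0, 1:] (Suc n) :: 'a poly) n = fact n"
proof -
  have "degree (gpoch 1 [:0, 1:] (Suc n) :: 'a poly) \<le> n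
        \<and> coeff (gpoch 1 [:0, 1:] (Suc n) :: 'a poly) n = fact n"
  proof (induction n)
    case 0
    then show ?case by (simp add: gpoch_def)
  next
    case (Suc n)
    let ?P = "gpoch 1 [:0, 1:] (Suc n) :: 'a poly"
    have step: "gpoch 1 [:0, 1:] (Suc (Suc n)) = ?P * [:1, of_nat (Suc n):]"
      by (simp add: gpoch_def of_nat_poly one_pCons)
    have "degree (?P * [:1, of_nat (Suc n):]) \<le> degree ?P + degree [:1, of_nat (Suc n) :: 'a:]"
      by (rule degree_mult_le)
    also have "\<dots> \<le> Suc n"
      using Suc.IH by simp
    finally have "degree (?P * [:1, of_nat (Suc n):]) \<le> Suc n" .
    moreover have "coeff ?P (Suc n) = 0"
      using Suc.IH by (intro coeff_eq_0) auto
    ultimately show ?case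
      using Suc.IH by (simp add: step)
  qed
  then show "degree (gpoch 1 [:0, 1:] (Suc n) :: 'a poly) \<le> n"
    and "coeff (gpoch 1 [:0, 1:] (Suc n) :: 'a poly) n = fact n"
    by simp_all
qed

lemma powq_series_nth:
  assumes "q \<noteq> 0"
  shows "powq_series q $ n = gpoch 1 q n / fact n"
proof -
  have "powq_series q $ n = (-q) ^ n * ((-1/q) gchoose n)"
    by (simp add: powq_series_def)
  also have "\<dots> = (\<Prod>m<n. -q) * (\<Prod>m<n. -1/q - of_nat m) / fact n"
    by (simp add: gbinomial_prod_rev atLeast0LessThan)
  also have "(\<Prod>m<n. -q) * (\<Prod>m<n. -1/q - of_nat m) = gpoch 1 q n"
    unfolding gpoch_def prod.distrib[symmetric] using assms by (intro prod.cong) (auto simp: field_simps)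
  finally show ?thesis .
qed

text \<open>The coefficient of t^n in the series F(t) = ((1 - q t)^(-1/q) - 1) / t, as a polynomial in q.\<close>

definition denom_coeff :: "nat \<Rightarrow> rat poly" where
  "denom_coeff n = smult (1 / fact (Suc n)) (gpoch 1 qvar (Suc n))"

lemma poly_denom_coeff: "poly (denom_coeff n) x = gpoch 1 x (Suc n) / fact (Suc n)"
  by (simp add: denom_coeff_def poly_gpoch_qvar)

lemma degree_denom_coeff_le: "degree (denom_coeff n) \<le> n"
  using gpoch_qvar_degree_top_coeff(1)[of n] by (simp add: denom_coeff_def)

lemma coeff_denom_coeff: "coeff (denom_coeff n) n = 1 / of_nat (Suc n)"
  by (simp add: denom_coeff_def gpoch_qvar_degree_top_coeff(2))

lemma denom_coeff_0: "denom_coeff 0 = 1"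
  by (simp add: denom_coeff_def gpoch_def)

lemma poly_denom_coeff_at_0: "poly (denom_coeff n) 0 = 1 / fact (Suc n)"
  by (simp add: poly_denom_coeff gpoch_def)

lemma powq_series_minus_1:
  assumes "q \<noteq> 0"
  shows "powq_series q - 1 = fps_X * Abs_fps (\<lambda>n. poly (denom_coeff n) q)"
proof (rule fps_ext)
  fix n
  show "(powq_series q - 1) $ n = (fps_X * Abs_fps (\<lambda>n. poly (denom_coeff n) q)) $ n"
    by (cases n) (simp_all add: powq_series_nth[OF assms] poly_denom_coeff gpoch_def)
qed

lemma gregory_convolution:
  "(\<Sum>i\<le>j. 1 / of_nat (Suc (j - i)) * ((-1) ^ i * gregory i)) = (if j = 0 then 1 else (0::rat))"
proof -
  define D :: "rat fps" where "D = Abs_fps (\<lambda>n. (-1) ^ n / of_nat (Suc n))"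
  have "fps_ln 1 = fps_X * D"
    unfolding D_def by (intro fps_ext) (simp add: fps_ln_def of_nat_diff)
  then have gregory_nth: "gregory i = inverse D $ i" for i
    unfolding gregory_def by (simp add: D_def fps_divide_unit)
  have "inverse D * D = 1"
    by (rule inverse_mult_eq_1) (simp add: D_def)
  then have inverse_D: "(\<Sum>i\<le>j. gregory i * ((-1) ^ (j - i) / of_nat (Suc (j - i))))
      = (if j = 0 then 1 else 0)"
    by (simp add: fps_eq_iff fps_mult_nth gregory_nth D_def atLeast0AtMost)
  have sign: "1 / of_nat (Suc (j - i)) * ((-1) ^ i * gregory i)
      = (-1) ^ j * (gregory i * ((-1) ^ (j - i) / of_nat (Suc (j - i))))" if ij: "i \<le> j" for i
  proof -
    obtain k where "j = i + k"
      using le_Suc_ex[OF ij] by blast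
    then show ?thesis
      by (simp add: power_add mult_ac minus_one_mult_self)
  qed
  have "(\<Sum>i\<le>j. 1 / of_nat (Suc (j - i)) * ((-1) ^ i * gregory i))
      = (-1) ^ j * (\<Sum>i\<le>j. gregory i * ((-1) ^ (j - i) / of_nat (Suc (j - i))))"
    unfolding sum_distrib_left using sign by (intro sum.cong) auto
  also have "\<dots> = (if j = 0 then 1 else 0)"
    unfolding inverse_D by simp
  finally show ?thesis .
qed

lemma kaluza_coeffs_neg:
  fixes M :: "nat \<Rightarrow> rat"
  assumes M: "\<And>j. (\<Sum>i\<le>j. 1 / of_nat (Suc (j - i)) * M i) = (if j = 0 then 1 else 0)"
    and "0 < n"
  shows "M n < 0"
  using \<open>0 < n\<close>
proof (induction n rule: less_induct)
  case (less n)
  show ?case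
  proof (cases "n = 1")
    case True
    then show ?thesis
      using M[of 0] M[of 1] by (simp add: atMost_Suc)
  next
    case False
    then obtain m where n: "n = Suc m" and "0 < m"
      using less.prems by (cases n) auto
    txt \<open>Subtracting the equation for Suc m from (m + 1) / (m + 2) times the one for m cancels M 0
      and leaves M (Suc m) as a combination of M 1, ..., M m with positive weights; this is where
      the log-convexity of 1 / (n + 1) enters.\<close>
    define w :: "nat \<Rightarrow> rat" where "w i = (of_nat m + 1) / ((of_nat m + 2) * of_nat (Suc (m - i)))
                          - 1 / of_nat (Suc (Suc m - i))" for i
    have "(\<Sum>i\<le>m. M i * w i)
        = (of_nat m + 1) / (of_nat m + 2) * (\<Sum>i\<le>m. 1 / of_nat (Suc (m - i)) * M i)
          - (\<Sum>i\<le>m. 1 / of_nat (Suc (Suc m - i)) * M i)"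
      unfolding w_def sum_distrib_left sum_subtractf[symmetric]
      by (intro sum.cong refl) (simp add: field_simps)
    also have "\<dots> = M (Suc m)"
      using M[of m] M[of "Suc m"] \<open>0 < m\<close> by (simp add: atMost_Suc)
    finally have weighted: "(\<Sum>i\<le>m. M i * w i) = M (Suc m)" .
    have "w 0 = 0"
      by (simp add: w_def divide_simps) (simp add: algebra_simps)
    then have "M (Suc m) = (\<Sum>i\<in>{1..m}. M i * w i)"
      by (simp add: weighted[symmetric] atMost_atLeast0 sum.atLeast_Suc_atMost)
    also have "\<dots> < (\<Sum>i\<in>{1..m}. 0)"
    proof (rule sum_strict_mono)
      fix i
      assume i: "i \<in> {1..m}"
      define k where "k = m - i"
      have "(m + 2) * Suc k < (m + 1) * Suc (Suc k)"
        using i by (simp add: k_def algebra_simps)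
      then have "rat_of_nat (m + 2) * of_nat (Suc k) < of_nat (m + 1) * of_nat (Suc (Suc k))"
        by (simp only: of_nat_mult[symmetric] of_nat_less_iff)
      then have "0 < w i"
        using i by (simp add: w_def k_def Suc_diff_le divide_simps add.commute)
      moreover have "M i < 0"
        using i less.IH n by auto
      ultimately show "M i * w i < 0"
        by (simp add: mult_neg_pos)
    qed (use \<open>0 < m\<close> in auto)
    finally show ?thesis
      using n by simp
  qed
qed

lemma gregory_nonzero: "gregory j \<noteq> 0"
proof (cases "j = 0")
  case True
  then show ?thesis
    using gregory_convolution[of 0] by simp
next
  case False
  then have "(-1) ^ j * gregory j < 0"
    using kaluza_coeffs_neg[OF gregory_convolution] by simp
  then show ?thesis
    by auto
qed

context
  fixes c :: "nat \<Rightarrow> rat poly"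
  assumes c_recurrence: "\<And>j. (\<Sum>i\<le>j. smult (1 / fact (j + 1 - i)) (gpoch 1 qvar (j + 1 - i))
                                   * smult (1 / fact i) (c i)) = (if j = 0 then 1 else 0)"
begin

lemma c_convolution:
  "(\<Sum>i\<le>j. denom_coeff (j - i) * smult (1 / fact i) (c i)) = (if j = 0 then 1 else 0)"
proof -
  have "(\<Sum>i\<le>j. denom_coeff (j - i) * smult (1 / fact i) (c i))
      = (\<Sum>i\<le>j. smult (1 / fact (j + 1 - i)) (gpoch 1 qvar (j + 1 - i)) * smult (1 / fact i) (c i))"
    by (intro sum.cong refl) (simp add: denom_coeff_def Suc_diff_le)
  also have "\<dots> = (if j = 0 then 1 else 0)"
    by (rule c_recurrence)
  finally show ?thesis .
qed

lemma poly_c_convolution: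
  "(\<Sum>i\<le>j. poly (denom_coeff (j - i)) x * (poly (c i) x / fact i)) = (if j = 0 then 1 else 0)"
  using arg_cong[OF c_convolution, of "\<lambda>p. poly p x"] by (simp add: poly_sum)

lemma degree_c_le: "degree (c j) \<le> j"
proof (induction j rule: less_induct)
  case (less j)
  have "smult (1 / fact j) (c j)
      = (if j = 0 then 1 else 0) - (\<Sum>i<j. denom_coeff (j - i) * smult (1 / fact i) (c i))"
    using c_convolution[of j] by (simp add: denom_coeff_0 flip: lessThan_Suc_atMost)
  also have "degree \<dots> \<le> j"
  proof (intro degree_diff_le degree_sum_le)
    fix i
    assume "i \<in> {..<j}"
    then have "degree (denom_coeff (j - i)) + degree (smult (1 / fact i) (c i)) \<le> (j - i) + i"
      using less.IH degree_denom_coeff_le by (intro add_mono) auto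
    then show "degree (denom_coeff (j - i) * smult (1 / fact i) (c i)) \<le> j"
      using \<open>i \<in> {..<j}\<close> degree_mult_le order_trans by fastforce
  qed auto
  finally show ?case
    by simp
qed

lemma coeff_c_top: "coeff (c j) j = (-1) ^ j * fact j * gregory j"
proof -
  have top_term: "coeff (denom_coeff (j - i) * smult (1 / fact i) (c i)) j
      = 1 / of_nat (Suc (j - i)) * (coeff (c i) i / fact i)" if "i \<le> j" for i j
  proof -
    have "coeff (denom_coeff (j - i) * smult (1 / fact i) (c i)) ((j - i) + i)
        = coeff (denom_coeff (j - i)) (j - i) * coeff (smult (1 / fact i) (c i)) i"
      using degree_denom_coeff_le degree_c_le by (intro coeff_mult_degree_le_sum) auto
    then show ?thesis
      using that by (simp add: coeff_denom_coeff)
  qed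
  have "coeff (c j) j / fact j = (-1) ^ j * gregory j"
  proof (rule lower_triangular_solution_unique[where a = "\<lambda>j i. 1 / of_nat (Suc (j - i))"])
    fix j
    have "(\<Sum>i\<le>j. 1 / of_nat (Suc (j - i)) * (coeff (c i) i / fact i))
        = coeff (\<Sum>i\<le>j. denom_coeff (j - i) * smult (1 / fact i) (c i)) j"
      unfolding coeff_sum by (intro sum.cong refl) (simp only: atMost_iff top_term)
    also have "\<dots> = (if j = 0 then 1 else 0)"
      unfolding c_convolution by simp
    finally show "(\<Sum>i\<le>j. 1 / of_nat (Suc (j - i)) * (coeff (c i) i / fact i))
        = (if j = 0 then 1 else 0)" .
  qed (use gregory_convolution in auto)
  then show ?thesis
    by (simp add: field_simps)
qed

lemma degree_c: "degree (c j) = j"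
proof (rule antisym)
  show "j \<le> degree (c j)"
    using gregory_nonzero[of j] by (intro le_degree) (simp add: coeff_c_top)
qed (rule degree_c_le)

lemma coeff_c_0:
  fixes B :: "nat \<Rightarrow> rat"
  assumes bernoulli: "\<And>j. (\<Sum>i\<le>j. of_nat ((j + 1) choose i) * B i) = (if j = 0 then 1 else 0)"
  shows "coeff (c j) 0 = B j"
proof -
  have "poly (c j) 0 = B j"
  proof (rule lower_triangular_solution_unique[where a = "\<lambda>j i. of_nat ((j + 1) choose i)"])
    fix j
    have "(\<Sum>i\<le>j. of_nat ((j + 1) choose i) * poly (c i) 0)
        = fact (Suc j) * (\<Sum>i\<le>j. poly (denom_coeff (j - i)) 0 * (poly (c i) 0 / fact i))"
      unfolding sum_distrib_left
      by (intro sum.cong refl) (simp add: poly_denom_coeff_at_0 binomial_fact Suc_diff_le)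
    also have "\<dots> = (if j = 0 then 1 else 0)"
      unfolding poly_c_convolution by simp
    finally show "(\<Sum>i\<le>j. of_nat ((j + 1) choose i) * poly (c i) 0) = (if j = 0 then 1 else 0)" .
  qed (use bernoulli in auto)
  then show ?thesis
    by (simp add: poly_0_coeff_0)
qed

lemma c_egf:
  assumes "q \<noteq> 0"
  shows "Abs_fps (\<lambda>j. poly (c j) q / fact j) = fps_X / (powq_series q - 1)"
proof -
  define F where "F = Abs_fps (\<lambda>n. poly (denom_coeff n) q)"
  define C where "C = Abs_fps (\<lambda>j. poly (c j) q / fact j)"
  have "F * C = 1"
  proof (rule fps_ext)
    fix j
    have "(F * C) $ j = (\<Sum>i=0..j. C $ i * F $ (j - i))"
      by (simp only: mult.commute[of F] fps_mult_nth)
    also have "\<dots> = (\<Sum>i\<le>j. poly (denom_coeff (j - i)) q * (poly (c i) q / fact i))"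
      by (simp add: F_def C_def atLeast0AtMost mult.commute)
    also have "\<dots> = 1 $ j"
      unfolding poly_c_convolution by simp
    finally show "(F * C) $ j = 1 $ j" .
  qed
  then have "inverse F = C"
    by (rule fps_inverse_unique)
  moreover have "F $ 0 \<noteq> 0"
    by (simp add: F_def denom_coeff_0)
  ultimately show ?thesis
    using powq_series_minus_1[OF assms] by (simp add: F_def C_def fps_divide_unit)
qed

end

theorem lemma4p2:
  fixes c :: "nat \<Rightarrow> rat poly" and B :: "nat \<Rightarrow> rat"
  assumes hc: "\<And>j. (\<Sum>i\<le>j. smult (1 / fact (j + 1 - i)) (gpoch 1 qvar (j + 1 - i))
                     * smult (1 / fact i) (c i)) = (if j = 0 then 1 else 0)"
      and hB: "\<And>j. (\<Sum>i\<le>j. of_nat ((j + 1) choose i) * B i) = (if j = 0 then 1 else 0)"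
  shows "(\<forall>j. degree (c j) = j \<and> lead_coeff (c j) = (-1) ^ j * fact j * gregory j
              \<and> coeff (c j) 0 = B j)
         \<and> (\<forall>q::rat. q \<noteq> 0 \<longrightarrow>
           Abs_fps (\<lambda>j. poly (c j) q / fact j) = fps_X / (powq_series q - 1))"
  using degree_c[OF hc] coeff_c_top[OF hc] coeff_c_0[OF hc hB] c_egf[OF hc] by simp

end
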